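(* Let $\alpha\in[0,1]$ be irrational, $\theta\in[0,1)$ and $\lambda\in\mathbb{R}$, and for $k\in\mathbb{Z}$ let $\theta_k:=k\alpha\bmod 1$. Choose $p\in[1,\infty]$, $\varepsilon>0$ and $D\in\mathbb{N}$ such that $\varepsilon>2\|H_{\lambda,\alpha,0}\|(4/D)^{1/p}$ if $p<\infty$, and $\varepsilon>2\|H_{\lambda,\alpha,0}\|/D$ if $p=\infty$. Then \[\inf_{k\in\mathbb{Z}}\nu\big((H_{\lambda,\alpha,\theta_k})_+\big)\ge\min_{k\in\mathbb{Z}}\nu\big([H_{\lambda,\alpha,\theta_k}]_D\big)-\varepsilon.\]
   Context: $(H_{\lambda,\alpha,\psi}x)_n=x_{n+1}+x_{n-1}+\lambda v_{\alpha,\psi}(n)x_n$ on $\ell^p(\mathbb{Z})$ with $v_{\alpha,\psi}(n)=\chi_{[1-\alpha,1)}(n\alpha+\psi\bmod 1)$. For $A=(a_{ij})$, $A_+=(a_{ij})_{i,j=0}^\infty$ on $\ell^p(\{0,1,\dots\})$, and $[A]_D:\mathbb{C}^{D+1}\to\mathbb{C}^{D+2}$ denotes the restriction of $A_+$ to sequences supported in $\{0,\dots,D\}$ (i.e. $A_+\chi_{[0,D]}$ with the natural embeddings; its image is supported in $\{0,\dots,D+1\}$), with $p$-norms. Lower norm $\nu(B)=\inf\{\|Bx\|:\|x\|=1\}$. *)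

theory Defs
  imports "HOL-Analysis.Analysis"
begin

text \<open>Exponent p in [1,\<infinity>] is an extended real; p = \<infinity> is the sup-norm case.
  Sequences are complex-valued functions on an index set S (int for \<ell>^p(Z), nat for \<ell>^p({0,1,...})).\<close>

definition lp_mem :: "ereal \<Rightarrow> 'i set \<Rightarrow> ('i \<Rightarrow> complex) \<Rightarrow> bool" where
  "lp_mem p S x = (if p = \<infinity> then bdd_above ((\<lambda>n. norm (x n)) ` S)
                   else (\<lambda>n. norm (x n) powr real_of_ereal p) summable_on S)"

definition lp_norm :: "ereal \<Rightarrow> 'i set \<Rightarrow> ('i \<Rightarrow> complex) \<Rightarrow> real" where
  "lp_norm p S x = (if p = \<infinity> then (SUP n\<in>S. norm (x n))
                    else (infsum (\<lambda>n. norm (x n) powr real_of_ereal p) S) powr (1 / real_of_ereal p))"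

definition sturm_v :: "real \<Rightarrow> real \<Rightarrow> int \<Rightarrow> real" where
  "sturm_v \<alpha> \<psi> n = (if 1 - \<alpha> \<le> frac (of_int n * \<alpha> + \<psi>) \<and> frac (of_int n * \<alpha> + \<psi>) < 1 then 1 else 0)"

definition H_op :: "real \<Rightarrow> real \<Rightarrow> real \<Rightarrow> (int \<Rightarrow> complex) \<Rightarrow> int \<Rightarrow> complex" where
  "H_op lam \<alpha> \<psi> x n = x (n + 1) + x (n - 1) + complex_of_real (lam * sturm_v \<alpha> \<psi> n) * x n"

definition H_plus :: "real \<Rightarrow> real \<Rightarrow> real \<Rightarrow> (nat \<Rightarrow> complex) \<Rightarrow> nat \<Rightarrow> complex" where
  "H_plus lam \<alpha> \<psi> x n = x (Suc n) + (if n = 0 then 0 else x (n - 1))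
       + complex_of_real (lam * sturm_v \<alpha> \<psi> (int n)) * x n"

definition H_opnorm :: "ereal \<Rightarrow> real \<Rightarrow> real \<Rightarrow> real \<Rightarrow> real" where
  "H_opnorm p lam \<alpha> \<psi> = Sup {lp_norm p UNIV (H_op lam \<alpha> \<psi> x) | x. lp_mem p UNIV x \<and> lp_norm p UNIV x = 1}"

definition nu_H_plus :: "ereal \<Rightarrow> real \<Rightarrow> real \<Rightarrow> real \<Rightarrow> real" where
  "nu_H_plus p lam \<alpha> \<psi> = Inf {lp_norm p UNIV (H_plus lam \<alpha> \<psi> x) | x. lp_mem p UNIV x \<and> lp_norm p UNIV x = 1}"

text \<open>Lower norm \<nu>([H_{\<lambda>,\<alpha>,\<psi>}]_D) of the finite section C^{D+1} \<rightarrow> C^{D+2}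
  (x supported in {0..D}, image measured on {0..D+1}).\<close>
definition nu_H_section :: "ereal \<Rightarrow> real \<Rightarrow> real \<Rightarrow> real \<Rightarrow> nat \<Rightarrow> real" where
  "nu_H_section p lam \<alpha> \<psi> D = Inf {lp_norm p {0..D+1} (H_plus lam \<alpha> \<psi> x) | x.
        (\<forall>n>D. x n = 0) \<and> lp_norm p {0..D} x = 1}"

end

theory Submission
  imports Defs
begin

text \<open>
  Fix x of norm 1 and let T be the half-line operator at the phase frac (k\<alpha>). The potential
  depends only on n\<alpha> + \<theta>, so translating a piece w of x supported on D + 1 consecutive
  sites starting at s to the origin turns T into the finite section at frac ((k + s)\<alpha>).
  Hence every lower bound B of all finite-section lower norms satisfies B \<parallel>w\<parallel> \<le> \<parallel>T w\<parallel>, and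
  cutting x off to w changes T x only through the hopping terms at the ends of the window.

  For p < \<infinity> we sum this over all windows {m - D..m}: each site lies in D + 1 windows but
  enters the boundary terms at most four times, and the weighted convexity inequality for
  t powr p yields B \<le> \<parallel>T x\<parallel> + 2 (2 / (D + 1)) powr (1/p). For p = \<infinity> a tent-shaped cutoff
  of slope 1/L, L \<approx> D/2, centred at any site n gives B \<bar>x n\<bar> \<le> \<parallel>T x\<parallel> + 2/L, and
  2/L \<le> 4/D. Since \<parallel>H\<parallel> \<ge> 1 (and \<parallel>H\<parallel> \<ge> 2 for p = \<infinity>), both errors are below \<epsilon>.
\<close>

section \<open>Elementary inequalities\<close>

lemma powr_add_le_weighted:
  fixes V W t s q :: real
  assumes "0 < V" "0 < W" "0 < t" "0 < s" "1 \<le> q"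
  shows "(V + W) powr q \<le> ((t+s)/t) powr (q-1) * V powr q + ((t+s)/s) powr (q-1) * W powr q"
proof -
  define l where "l = s / (t+s)"
  have "1 - l = t / (t+s)"
    using assms by (simp add: l_def field_simps)
  then have l: "0 \<le> l" "l \<le> 1" "1 - l = 1 / ((t+s)/t)" "l = 1 / ((t+s)/s)"
    using assms by (simp_all add: l_def)
  have "(1 - l) * (V * ((t+s)/t)) = V"
    unfolding l(3) using assms by simp
  moreover have "l * (W * ((t+s)/s)) = W"
    unfolding l(4) using assms by simp
  ultimately have "V + W = (1 - l) *\<^sub>R (V * ((t+s)/t)) + l *\<^sub>R (W * ((t+s)/s))"
    by simp
  moreover have "((1 - l) *\<^sub>R (V * ((t+s)/t)) + l *\<^sub>R (W * ((t+s)/s))) powr q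
      \<le> (1 - l) * (V * ((t+s)/t)) powr q + l * (W * ((t+s)/s)) powr q"
    using convex_onD[OF powr_convex[OF assms(5)], of l "V * ((t+s)/t)" "W * ((t+s)/s)"] l(1,2) assms
    by simp
  ultimately have "(V + W) powr q \<le> (1 - l) * (V * ((t+s)/t)) powr q + l * (W * ((t+s)/s)) powr q"
    by simp
  also have "\<dots> = ((t+s)/t) powr (q-1) * V powr q + ((t+s)/s) powr (q-1) * W powr q"
  proof -
    have rescale: "(1/a) * (X * a) powr q = a powr (q-1) * X powr q" if "0 < a" "0 \<le> X" for a X
      using that by (simp add: powr_mult powr_diff)
    then show ?thesis
      using rescale[of "(t+s)/t" V] rescale[of "(t+s)/s" W] assms l(3,4) by simp
  qed
  finally show ?thesis .
qed

lemma powr_le_weighted_sum: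
  fixes U V W t s q :: real
  assumes "0 \<le> U" "U \<le> V + W" "0 \<le> V" "0 \<le> W" "0 < t" "0 < s" "1 \<le> q"
  shows "U powr q \<le> ((t+s)/t) powr (q-1) * V powr q + ((t+s)/s) powr (q-1) * W powr q"
proof -
  have "1 \<le> ((t+s)/t) powr (q-1)" "1 \<le> ((t+s)/s) powr (q-1)"
    using assms by (auto intro!: ge_one_powr_ge_zero)
  then have "W powr q \<le> ((t+s)/s) powr (q-1) * W powr q" "V powr q \<le> ((t+s)/t) powr (q-1) * V powr q"
    by (simp_all add: mult_le_cancel_right1)
  moreover have "U powr q \<le> (V + W) powr q"
    using assms by (intro powr_mono2) auto
  ultimately show ?thesis
    using powr_add_le_weighted[of V W t s q] assms by (cases "V = 0 \<or> W = 0") auto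
qed

lemma weighted_powr_split_eq:
  fixes t s q :: real
  assumes "0 < t" "0 < s"
  shows "((t+s)/t) powr (q-1) * t powr q + ((t+s)/s) powr (q-1) * s powr q = (t+s) powr q"
proof -
  have "(X/y) powr (q-1) * y powr q = X powr (q-1) * y" if "0 < X" "0 < y" for X y :: real
    using that by (simp add: powr_divide powr_diff)
  then have "((t+s)/t) powr (q-1) * t powr q + ((t+s)/s) powr (q-1) * s powr q
      = (t+s) powr (q-1) * (t+s) powr 1"
    using assms by (simp add: distrib_left)
  also have "\<dots> = (t+s) powr q"
    using powr_add[of "t+s" "q-1" 1] by simp
  finally show ?thesis .
qed

lemma powr_le_sum3:
  fixes U A B C q :: real
  assumes "0 \<le> U" "U \<le> A + B + C" "0 \<le> A" "0 \<le> B" "0 \<le> C" "0 < q"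
  shows "U powr q \<le> 3 powr q * (A powr q + B powr q + C powr q)"
proof -
  have "U \<le> 3 * max A (max B C)"
    using assms by linarith
  then have "U powr q \<le> 3 powr q * max A (max B C) powr q"
    using assms by (metis powr_mono2 powr_mult less_imp_le)
  also have "\<dots> \<le> 3 powr q * (A powr q + B powr q + C powr q)"
    by (intro mult_left_mono) (auto simp: max_def)
  finally show ?thesis .
qed

lemma norm_add3_le: "norm (a + b + c) \<le> norm a + norm b + norm c"
  for a b c :: "'a::real_normed_vector"
  using norm_triangle_ineq[of "a + b" c] norm_triangle_ineq[of a b] by linarith

lemma sum_le_sum_of_support:
  fixes f :: "'a \<Rightarrow> real"
  assumes "finite A" "finite B" "\<And>n. n \<in> A - B \<Longrightarrow> f n = 0" "\<And>n. n \<in> B \<Longrightarrow> 0 \<le> f n"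
  shows "sum f A \<le> sum f B"
proof -
  have "sum f A = sum f (A \<inter> B)"
    using assms by (intro sum.mono_neutral_right) auto
  also have "\<dots> \<le> sum f B"
    using assms by (intro sum_mono2) auto
  finally show ?thesis .
qed

lemma sum_neighbours_le:
  fixes a :: "nat \<Rightarrow> real"
  assumes "\<And>n. 0 \<le> a n"
  shows "(\<Sum>n\<le>R. a (Suc n)) + (\<Sum>n\<le>R. if n = 0 then 0 else a (n - 1)) \<le> 2 * (\<Sum>n\<le>Suc R. a n)"
proof -
  have "(\<Sum>n\<le>R. a (Suc n)) \<le> (\<Sum>n\<le>Suc R. a n)"
    unfolding sum.atMost_Suc_shift[of a] using assms by simp
  moreover have "(\<Sum>n\<le>R. if n = 0 then 0 else a (n - 1)) \<le> (\<Sum>n\<le>Suc R. if n = 0 then 0 else a (n - 1))"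
    using assms by (intro sum_mono2) auto
  moreover have "(\<Sum>n\<le>Suc R. if n = 0 then 0 else a (n - 1)) = (\<Sum>n\<le>R. a n)"
    unfolding sum.atMost_Suc_shift[of "\<lambda>n. if n = 0 then 0 else a (n - 1)"] by simp
  moreover have "(\<Sum>n\<le>R. a n) \<le> (\<Sum>n\<le>Suc R. a n)"
    using assms by (intro sum_mono2) auto
  ultimately show ?thesis
    by linarith
qed

lemma has_sum_finite_support:
  assumes "finite F" "F \<subseteq> S" "\<And>n. n \<in> S - F \<Longrightarrow> f n = 0"
  shows "(f has_sum sum f F) S"
  using has_sum_cong_neutral[of S F f f "sum f F"] has_sum_finite[OF assms(1)] assms by auto

lemma summable_on_shift_int:
  fixes a :: "int \<Rightarrow> real"
  assumes "a summable_on UNIV"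
  shows "(\<lambda>n. a (n + c)) summable_on UNIV" "infsum (\<lambda>n. a (n + c)) UNIV = infsum a UNIV"
proof -
  have "bij_betw (\<lambda>n. n + c) UNIV UNIV"
    by (rule bij_betwI[of _ _ _ "\<lambda>n. n - c"]) auto
  then show "(\<lambda>n. a (n + c)) summable_on UNIV" "infsum (\<lambda>n. a (n + c)) UNIV = infsum a UNIV"
    using summable_on_reindex_bij_betw[of "\<lambda>n. n + c" UNIV UNIV a]
      infsum_reindex_bij_betw[of "\<lambda>n. n + c" UNIV UNIV a] assms
    by simp_all
qed

lemma summable_on_shift_nat:
  fixes a :: "nat \<Rightarrow> real"
  assumes "a summable_on UNIV"
  shows "(\<lambda>n. a (Suc n)) summable_on UNIV" "(\<lambda>n. if n = 0 then 0 else a (n - 1)) summable_on UNIV"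
proof -
  have "a summable_on range Suc"
    using assms by (rule summable_on_subset_banach) simp
  then show "(\<lambda>n. a (Suc n)) summable_on UNIV"
    using summable_on_reindex[of Suc UNIV a] by (simp add: o_def)
  have "(\<lambda>n. if n = 0 then 0 else a (n - 1)) summable_on UNIV
      \<longleftrightarrow> (\<lambda>n. if n = 0 then 0 else a (n - 1)) summable_on range Suc"
    by (rule summable_on_cong_neutral) (auto simp: image_iff, presburger)
  also have "\<dots> \<longleftrightarrow> a summable_on UNIV"
    using summable_on_reindex[of Suc UNIV "\<lambda>n. if n = 0 then 0 else a (n - 1)"] by (simp add: o_def)
  finally show "(\<lambda>n. if n = 0 then 0 else a (n - 1)) summable_on UNIV"
    using assms by simp
qed

lemma mult_sums_le:
  fixes f :: "nat \<Rightarrow> real"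
  assumes "f sums S" "\<And>M. c * (\<Sum>n\<le>M. f n) \<le> d"
  shows "c * S \<le> d"
proof -
  have "(\<lambda>M. c * (\<Sum>n<Suc M. f n)) \<longlonglongrightarrow> c * S"
    using LIMSEQ_Suc[OF assms(1)[unfolded sums_def]] by (rule tendsto_mult_left)
  then show ?thesis
    using assms(2) by (intro LIMSEQ_le_const2) (auto simp: lessThan_Suc_atMost)
qed

section \<open>Sequence norms\<close>

lemma real_of_ereal_ge_1: "1 \<le> p \<Longrightarrow> p \<noteq> \<infinity> \<Longrightarrow> 1 \<le> real_of_ereal p"
  by (cases p) auto

lemma lp_norm_powr:
  assumes "1 \<le> p" "p \<noteq> \<infinity>"
  shows "lp_norm p S x powr real_of_ereal p = infsum (\<lambda>n. norm (x n) powr real_of_ereal p) S"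
  using assms real_of_ereal_ge_1[OF assms]
  by (simp add: lp_norm_def powr_powr infsum_nonneg)

lemma lp_norm_eq_1_iff_infsum:
  assumes "1 \<le> p" "p \<noteq> \<infinity>"
  shows "lp_norm p S x = 1 \<longleftrightarrow> infsum (\<lambda>n. norm (x n) powr real_of_ereal p) S = 1"
  using lp_norm_powr[OF assms, of S x] assms
  by (auto simp: lp_norm_def)

lemma lp_norm_infinity_ge:
  "n \<in> S \<Longrightarrow> bdd_above ((\<lambda>n. norm (x n)) ` S) \<Longrightarrow> norm (x n) \<le> lp_norm \<infinity> S x"
  unfolding lp_norm_def by (simp add: cSUP_upper[of n S "\<lambda>n. norm (x n)"])

lemma lp_norm_infinity_le:
  "S \<noteq> {} \<Longrightarrow> (\<And>n. n \<in> S \<Longrightarrow> norm (x n) \<le> c) \<Longrightarrow> lp_norm \<infinity> S x \<le> c"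
  by (simp add: lp_norm_def cSUP_least)

lemma lp_norm_nonneg:
  assumes "finite S" "S \<noteq> {}"
  shows "0 \<le> lp_norm p S x"
proof (cases "p = \<infinity>")
  case True
  obtain n where "n \<in> S"
    using assms by auto
  moreover have "bdd_above ((\<lambda>n. norm (x n)) ` S)"
    using assms by simp
  ultimately have "norm (x n) \<le> lp_norm \<infinity> S x"
    by (rule lp_norm_infinity_ge)
  then show ?thesis
    unfolding True using norm_ge_zero[of "x n"] by linarith
qed (simp add: lp_norm_def)

lemma lp_norm_scale:
  assumes "finite S" "S \<noteq> {}" "1 \<le> p" "0 \<le> c"
  shows "lp_norm p S (\<lambda>n. complex_of_real c * x n) = c * lp_norm p S x"
proof (cases "p = \<infinity>")
  case True
  have "continuous (at_left z) (\<lambda>y. c * y)" for z :: real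
    by (intro continuous_intros)
  then have "c * (SUP n\<in>S. norm (x n)) = (SUP n\<in>S. c * norm (x n))"
    using continuous_at_Sup_mono[of "\<lambda>y. c * y" "(\<lambda>n. norm (x n)) ` S"] assms
    by (auto simp: mono_def mult_left_mono image_image)
  then show ?thesis
    using True assms by (simp add: lp_norm_def norm_mult)
next
  case False
  define q where "q = real_of_ereal p"
  have "q \<ge> 1"
    using real_of_ereal_ge_1[OF assms(3) False] q_def by simp
  moreover have "(\<Sum>n\<in>S. norm (complex_of_real c * x n) powr q) = c powr q * (\<Sum>n\<in>S. norm (x n) powr q)"
    using assms by (simp add: norm_mult powr_mult sum_distrib_left)
  ultimately show ?thesis
    using False assms by (simp add: lp_norm_def q_def[symmetric] powr_mult sum_nonneg powr_powr)
qed

lemma lp_norm_delta: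
  assumes "i \<in> S"
  shows "lp_mem p S (\<lambda>n. if n = i then 1 else 0)" "lp_norm p S (\<lambda>n. if n = i then 1 else 0) = 1"
proof -
  have "(\<lambda>n. norm (if n = i then 1 else 0 :: complex) powr r) = (\<lambda>n. if n = i then 1 else 0)" for r
    by auto
  moreover have "(\<lambda>n. if n = i then 1 else 0 :: real) summable_on S"
    "infsum (\<lambda>n. if n = i then 1 else 0 :: real) S = 1"
    using has_sum_finite_support[of "{i}" S "\<lambda>n. if n = i then 1 else 0 :: real"] assms
    by (simp_all add: has_sum_iff)
  moreover have "(SUP n\<in>S. norm (if n = i then 1 else 0 :: complex)) = 1"
    using assms by (intro cSup_eq_maximum) auto
  moreover have "bdd_above ((\<lambda>n. norm (if n = i then 1 else 0 :: complex)) ` S)"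
    by (intro bdd_aboveI[of _ 1]) auto
  ultimately show "lp_mem p S (\<lambda>n. if n = i then 1 else 0)" "lp_norm p S (\<lambda>n. if n = i then 1 else 0) = 1"
    by (simp_all add: lp_mem_def lp_norm_def)
qed

lemma lp_norm_shift_powr:
  fixes y :: "nat \<Rightarrow> complex"
  assumes "1 \<le> p" "p \<noteq> \<infinity>"
  shows "lp_norm p {0..N} (\<lambda>n. y (n + s)) powr real_of_ereal p
    = (\<Sum>n\<in>{s..s+N}. norm (y n) powr real_of_ereal p)"
  unfolding lp_norm_powr[OF assms] infsum_finite[OF finite_atLeastAtMost]
  using sum.shift_bounds_cl_nat_ivl[of "\<lambda>n. norm (y n) powr real_of_ereal p" 0 s N]
  by (simp add: add.commute)

section \<open>The Sturmian operators\<close>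

lemma sturm_v_bounds: "0 \<le> sturm_v \<alpha> \<psi> n" "sturm_v \<alpha> \<psi> n \<le> 1"
  by (simp_all add: sturm_v_def)

lemma sturm_v_0_0: "\<alpha> < 1 \<Longrightarrow> sturm_v \<alpha> 0 0 = 0"
  by (simp add: sturm_v_def)

lemma sturm_v_shift:
  "sturm_v \<alpha> (frac (of_int (k + int s) * \<alpha>)) (int n) = sturm_v \<alpha> (frac (of_int k * \<alpha>)) (int (n + s))"
proof -
  have "frac (of_int (int n) * \<alpha> + frac (of_int (k + int s) * \<alpha>))
      = frac (of_int (int (n + s)) * \<alpha> + frac (of_int k * \<alpha>))"
    using frac_add_simps(2)[of "of_int (int n) * \<alpha>" "of_int (k + int s) * \<alpha>"]
      frac_add_simps(2)[of "of_int (int (n + s)) * \<alpha>" "of_int k * \<alpha>"]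
    by (simp add: algebra_simps)
  then show ?thesis
    by (simp add: sturm_v_def)
qed

lemma H_plus_shift:
  assumes "\<And>n. n < s \<Longrightarrow> y n = 0"
  shows "H_plus lam \<alpha> (frac (of_int (k + int s) * \<alpha>)) (\<lambda>n. y (n + s)) n
       = H_plus lam \<alpha> (frac (of_int k * \<alpha>)) y (n + s)"
proof (cases n)
  case 0
  then show ?thesis
    using assms[of "s - 1"] unfolding H_plus_def sturm_v_shift by (cases s) auto
next
  case (Suc m)
  then have "n - 1 + s = n + s - 1"
    by simp
  then show ?thesis
    using Suc unfolding H_plus_def sturm_v_shift by simp
qed

lemma H_plus_scale:
  "H_plus lam \<alpha> \<psi> (\<lambda>n. c * x n) n = c * H_plus lam \<alpha> \<psi> x n"
  by (simp add: H_plus_def algebra_simps)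

lemma norm_H_plus_le:
  "norm (H_plus lam \<alpha> \<psi> x n)
     \<le> norm (x (Suc n)) + (if n = 0 then 0 else norm (x (n - 1))) + \<bar>lam\<bar> * norm (x n)"
proof -
  have "norm (complex_of_real (lam * sturm_v \<alpha> \<psi> (int n)) * x n) \<le> \<bar>lam\<bar> * norm (x n)"
    using sturm_v_bounds[of \<alpha> \<psi> "int n"]
    by (simp add: norm_mult abs_mult mult_left_le mult_right_mono)
  moreover have "norm (if n = 0 then 0 else x (n - 1)) = (if n = 0 then 0 else norm (x (n - 1)))"
    by simp
  ultimately show ?thesis
    unfolding H_plus_def
    using norm_add3_le[of "x (Suc n)" "if n = 0 then 0 else x (n - 1)"
        "complex_of_real (lam * sturm_v \<alpha> \<psi> (int n)) * x n"]
    by linarith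
qed

lemma norm_H_op_le:
  "norm (H_op lam \<alpha> \<psi> x n) \<le> norm (x (n + 1)) + norm (x (n - 1)) + \<bar>lam\<bar> * norm (x n)"
proof -
  have "norm (complex_of_real (lam * sturm_v \<alpha> \<psi> n) * x n) \<le> \<bar>lam\<bar> * norm (x n)"
    using sturm_v_bounds[of \<alpha> \<psi> n]
    by (simp add: norm_mult abs_mult mult_left_le mult_right_mono)
  then show ?thesis
    unfolding H_op_def
    using norm_add3_le[of "x (n + 1)" "x (n - 1)" "complex_of_real (lam * sturm_v \<alpha> \<psi> n) * x n"]
    by linarith
qed

lemma lp_mem_H_plus:
  assumes "1 \<le> p" "lp_mem p UNIV x"
  shows "lp_mem p UNIV (H_plus lam \<alpha> \<psi> x)"
proof (cases "p = \<infinity>")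
  case True
  then obtain M where M: "\<And>n. norm (x n) \<le> M"
    using assms(2) by (auto simp: lp_mem_def bdd_above_def)
  have "0 \<le> M"
    using M[of 0] norm_ge_zero[of "x 0"] by linarith
  have "norm (H_plus lam \<alpha> \<psi> x n) \<le> M + M + \<bar>lam\<bar> * M" for n
  proof -
    have "(if n = 0 then 0 else norm (x (n - 1))) \<le> M"
      using M \<open>0 \<le> M\<close> by simp
    then show ?thesis
      using norm_H_plus_le[of lam \<alpha> \<psi> x n] M[of "Suc n"] mult_left_mono[OF M[of n], of "\<bar>lam\<bar>"]
      by linarith
  qed
  then show ?thesis
    using True by (auto simp: lp_mem_def intro!: bdd_aboveI2)
next
  case False
  define q where "q = real_of_ereal p"
  define a where "a = (\<lambda>n. norm (x n) powr q)"
  have "0 < q"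
    using real_of_ereal_ge_1[OF assms(1) False] by (simp add: q_def)
  have a: "a summable_on UNIV"
    using assms(2) False by (simp add: lp_mem_def a_def q_def)
  have "norm (H_plus lam \<alpha> \<psi> x n) powr q
      \<le> 3 powr q * (a (Suc n) + (if n = 0 then 0 else a (n - 1)) + \<bar>lam\<bar> powr q * a n)" for n
  proof -
    have "norm (H_plus lam \<alpha> \<psi> x n) powr q \<le> 3 powr q * (norm (x (Suc n)) powr q
        + (if n = 0 then 0 else norm (x (n - 1))) powr q + (\<bar>lam\<bar> * norm (x n)) powr q)"
      by (rule powr_le_sum3[OF _ norm_H_plus_le]) (use \<open>0 < q\<close> in auto)
    then show ?thesis
      by (cases n) (simp_all add: a_def powr_mult)
  qed
  moreover have "(\<lambda>n. 3 powr q * (a (Suc n) + (if n = 0 then 0 else a (n - 1)) + \<bar>lam\<bar> powr q * a n))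
      summable_on UNIV"
    using summable_on_shift_nat[OF a] a by (intro summable_on_cmult_right summable_on_add) auto
  ultimately show ?thesis
    using False by (auto simp: lp_mem_def q_def[symmetric] intro: summable_on_comparison_test)
qed

lemma infsum_norm_H_op_powr_le:
  assumes "1 \<le> q" "(\<lambda>n. norm (x n) powr q) summable_on UNIV" "infsum (\<lambda>n. norm (x n) powr q) UNIV = 1"
  shows "infsum (\<lambda>n. norm (H_op lam \<alpha> \<psi> x n) powr q) UNIV \<le> 3 powr q * (2 + \<bar>lam\<bar> powr q)"
proof -
  define a where "a = (\<lambda>n. norm (x n) powr q)"
  have a: "a summable_on UNIV" "infsum a UNIV = 1"
    using assms by (simp_all add: a_def)
  have bound: "norm (H_op lam \<alpha> \<psi> x n) powr q
      \<le> 3 powr q * (a (n + 1) + a (n - 1) + \<bar>lam\<bar> powr q * a n)" for n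
  proof -
    have "norm (H_op lam \<alpha> \<psi> x n) powr q \<le> 3 powr q * (norm (x (n + 1)) powr q
        + norm (x (n - 1)) powr q + (\<bar>lam\<bar> * norm (x n)) powr q)"
      by (rule powr_le_sum3[OF _ norm_H_op_le]) (use assms(1) in auto)
    then show ?thesis
      by (simp add: a_def powr_mult)
  qed
  have shifts: "(\<lambda>n. a (n + 1)) summable_on UNIV" "(\<lambda>n. a (n - 1)) summable_on UNIV"
    "infsum (\<lambda>n. a (n + 1)) UNIV = 1" "infsum (\<lambda>n. a (n - 1)) UNIV = 1"
    using summable_on_shift_int[OF a(1), of 1] summable_on_shift_int[OF a(1), of "-1"] a(2)
    by simp_all
  have sum_bound: "(\<lambda>n. 3 powr q * (a (n + 1) + a (n - 1) + \<bar>lam\<bar> powr q * a n)) summable_on UNIV"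
    using shifts a by (intro summable_on_cmult_right summable_on_add) auto
  have "infsum (\<lambda>n. norm (H_op lam \<alpha> \<psi> x n) powr q) UNIV
      \<le> infsum (\<lambda>n. 3 powr q * (a (n + 1) + a (n - 1) + \<bar>lam\<bar> powr q * a n)) UNIV"
    using bound sum_bound
    by (intro infsum_mono summable_on_comparison_test[OF sum_bound]) (auto simp: a_def)
  also have "\<dots> = 3 powr q * (2 + \<bar>lam\<bar> powr q)"
    using shifts a by (simp add: infsum_cmult_right summable_on_add summable_on_cmult_right infsum_add)
  finally show ?thesis .
qed

lemma bdd_above_H_op_norms:
  assumes "1 \<le> p"
  shows "bdd_above {lp_norm p UNIV (H_op lam \<alpha> \<psi> x) | x. lp_mem p UNIV x \<and> lp_norm p UNIV x = 1}"
proof (cases "p = \<infinity>")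
  case True
  have "lp_norm p UNIV (H_op lam \<alpha> \<psi> x) \<le> 2 + \<bar>lam\<bar>"
    if "lp_mem p UNIV x" "lp_norm p UNIV x = 1" for x
  proof -
    have x: "norm (x n) \<le> 1" for n
      using that True lp_norm_infinity_ge[of n UNIV x] by (simp add: lp_mem_def)
    have "norm (H_op lam \<alpha> \<psi> x n) \<le> 2 + \<bar>lam\<bar>" for n
      using norm_H_op_le[of lam \<alpha> \<psi> x n] x[of n] x[of "n + 1"] x[of "n - 1"]
        mult_left_mono[OF x[of n], of "\<bar>lam\<bar>"] by simp
    then show ?thesis
      using True by (simp add: lp_norm_infinity_le)
  qed
  then show ?thesis
    by (auto intro!: bdd_aboveI[of _ "2 + \<bar>lam\<bar>"])
next
  case False
  define q where "q = real_of_ereal p"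
  have "1 \<le> q"
    using real_of_ereal_ge_1[OF assms False] by (simp add: q_def)
  have "lp_norm p UNIV (H_op lam \<alpha> \<psi> x) \<le> (3 powr q * (2 + \<bar>lam\<bar> powr q)) powr (1/q)"
    if "lp_mem p UNIV x" "lp_norm p UNIV x = 1" for x
  proof -
    have "infsum (\<lambda>n. norm (H_op lam \<alpha> \<psi> x n) powr q) UNIV \<le> 3 powr q * (2 + \<bar>lam\<bar> powr q)"
      using that False \<open>1 \<le> q\<close>
      by (intro infsum_norm_H_op_powr_le) (simp_all add: lp_mem_def q_def lp_norm_eq_1_iff_infsum[OF assms False])
    then show ?thesis
      using False \<open>1 \<le> q\<close> by (simp add: lp_norm_def q_def[symmetric] powr_mono2 infsum_nonneg)
  qed
  then show ?thesis
    by (auto intro!: bdd_aboveI[of _ "(3 powr q * (2 + \<bar>lam\<bar> powr q)) powr (1/q)"])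
qed

lemma lp_norm_H_op_le_H_opnorm:
  assumes "1 \<le> p" "lp_mem p UNIV x" "lp_norm p UNIV x = 1"
  shows "lp_norm p UNIV (H_op lam \<alpha> \<psi> x) \<le> H_opnorm p lam \<alpha> \<psi>"
  unfolding H_opnorm_def using assms by (intro cSup_upper bdd_above_H_op_norms) auto

lemma H_opnorm_ge_1:
  assumes "1 \<le> p" "p \<noteq> \<infinity>" "\<alpha> < 1"
  shows "1 \<le> H_opnorm p lam \<alpha> 0"
proof -
  define q where "q = real_of_ereal p"
  have "1 \<le> q"
    using real_of_ereal_ge_1[OF assms(1,2)] by (simp add: q_def)
  define \<delta> where "\<delta> = (\<lambda>n::int. if n = 0 then 1 else 0 :: complex)"
  have "H_op lam \<alpha> 0 \<delta> = (\<lambda>n. if n \<in> {-1, 1} then 1 else 0)"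
    using sturm_v_0_0[OF assms(3)] by (auto simp: H_op_def \<delta>_def)
  then have "((\<lambda>n. norm (H_op lam \<alpha> 0 \<delta> n) powr q) has_sum 2) UNIV"
    using has_sum_finite_support[of "{-1, 1}" UNIV "\<lambda>n. norm (H_op lam \<alpha> 0 \<delta> n) powr q"] by simp
  then have "lp_norm p UNIV (H_op lam \<alpha> 0 \<delta>) = 2 powr (1/q)"
    using assms by (simp add: lp_norm_def q_def has_sum_iff)
  moreover have "lp_norm p UNIV (H_op lam \<alpha> 0 \<delta>) \<le> H_opnorm p lam \<alpha> 0"
    unfolding \<delta>_def by (rule lp_norm_H_op_le_H_opnorm[OF assms(1) lp_norm_delta[OF UNIV_I]])
  ultimately show ?thesis
    using \<open>1 \<le> q\<close> ge_one_powr_ge_zero[of 2 "1/q"] by simp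
qed

lemma H_opnorm_infinity_ge_2:
  assumes "\<alpha> < 1"
  shows "2 \<le> H_opnorm \<infinity> lam \<alpha> 0"
proof -
  define one where "one = (\<lambda>n::int. 1 :: complex)"
  have one: "lp_mem \<infinity> UNIV one" "lp_norm \<infinity> UNIV one = 1"
    by (simp_all add: lp_mem_def lp_norm_def one_def)
  have "norm (H_op lam \<alpha> 0 one n) \<le> 2 + \<bar>lam\<bar>" for n
    using norm_H_op_le[of lam \<alpha> 0 one n] by (simp add: one_def)
  then have "norm (H_op lam \<alpha> 0 one 0) \<le> lp_norm \<infinity> UNIV (H_op lam \<alpha> 0 one)"
    by (intro lp_norm_infinity_ge bdd_aboveI2) auto
  moreover have "norm (H_op lam \<alpha> 0 one 0) = 2"
    using sturm_v_0_0[OF assms] by (simp add: H_op_def one_def)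
  ultimately show ?thesis
    using lp_norm_H_op_le_H_opnorm[of \<infinity> one lam \<alpha> 0] one by simp
qed

section \<open>Finite sections\<close>

lemma nu_H_section_le:
  assumes "\<forall>n>D. x n = 0" "lp_norm p {0..D} x = 1"
  shows "nu_H_section p lam \<alpha> \<psi> D \<le> lp_norm p {0..D+1} (H_plus lam \<alpha> \<psi> x)"
  unfolding nu_H_section_def
  by (rule cInf_lower) (use assms in \<open>auto intro!: bdd_belowI[of _ 0] lp_norm_nonneg\<close>)

lemma nu_H_section_nonneg: "0 \<le> nu_H_section p lam \<alpha> \<psi> D"
proof -
  have "lp_norm p {0..D} (\<lambda>n. if n = 0 then 1 else 0) = 1"
    by (simp add: lp_norm_delta)
  then have delta: "lp_norm p {0..D+1} (H_plus lam \<alpha> \<psi> (\<lambda>n. if n = 0 then 1 else 0))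
      \<in> {lp_norm p {0..D+1} (H_plus lam \<alpha> \<psi> x) | x. (\<forall>n>D. x n = 0) \<and> lp_norm p {0..D} x = 1}"
    by auto
  show ?thesis
    unfolding nu_H_section_def
  proof (rule cInf_greatest)
    fix y
    assume "y \<in> {lp_norm p {0..D+1} (H_plus lam \<alpha> \<psi> x) | x. (\<forall>n>D. x n = 0) \<and> lp_norm p {0..D} x = 1}"
    then show "0 \<le> y"
      by (auto intro!: lp_norm_nonneg)
  qed (use delta in blast)
qed

lemma nu_H_section_mult_le:
  assumes "1 \<le> p" "\<forall>n>D. x n = 0"
  shows "nu_H_section p lam \<alpha> \<psi> D * lp_norm p {0..D} x \<le> lp_norm p {0..D+1} (H_plus lam \<alpha> \<psi> x)"
proof -
  define W where "W = lp_norm p {0..D} x"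
  show ?thesis
  proof (cases "W = 0")
    case True
    then show ?thesis
      by (simp add: W_def lp_norm_nonneg)
  next
    case False
    then have "0 < W"
      using lp_norm_nonneg[of "{0..D}" p x] by (simp add: W_def)
    define z where "z = (\<lambda>n. complex_of_real (1/W) * x n)"
    have "lp_norm p {0..D} z = 1"
      using lp_norm_scale[of "{0..D}" p "1/W" x] \<open>0 < W\<close> assms by (simp add: z_def W_def)
    then have "nu_H_section p lam \<alpha> \<psi> D \<le> lp_norm p {0..D+1} (H_plus lam \<alpha> \<psi> z)"
      using assms by (intro nu_H_section_le) (auto simp: z_def)
    also have "H_plus lam \<alpha> \<psi> z = (\<lambda>n. complex_of_real (1/W) * H_plus lam \<alpha> \<psi> x n)"
      unfolding z_def by (intro ext H_plus_scale)
    also have "lp_norm p {0..D+1} \<dots> = lp_norm p {0..D+1} (H_plus lam \<alpha> \<psi> x) / W"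
      using lp_norm_scale[of "{0..D+1}" p "1/W" "H_plus lam \<alpha> \<psi> x"] \<open>0 < W\<close> assms by simp
    finally show ?thesis
      using \<open>0 < W\<close> by (simp add: W_def field_simps)
  qed
qed

lemma nu_H_section_shift_mult_le:
  assumes "1 \<le> p" "\<And>n. n < s \<or> s + D < n \<Longrightarrow> y n = 0"
  shows "nu_H_section p lam \<alpha> (frac (of_int (k + int s) * \<alpha>)) D * lp_norm p {0..D} (\<lambda>n. y (n + s))
     \<le> lp_norm p {0..D+1} (\<lambda>n. H_plus lam \<alpha> (frac (of_int k * \<alpha>)) y (n + s))"
proof -
  have "H_plus lam \<alpha> (frac (of_int (k + int s) * \<alpha>)) (\<lambda>n. y (n + s))
      = (\<lambda>n. H_plus lam \<alpha> (frac (of_int k * \<alpha>)) y (n + s))"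
    using assms(2) by (intro ext H_plus_shift) auto
  moreover have "\<forall>n>D. y (n + s) = 0"
    using assms(2) by auto
  ultimately show ?thesis
    using nu_H_section_mult_le[OF assms(1), of D "\<lambda>n. y (n + s)" lam \<alpha> "frac (of_int (k + int s) * \<alpha>)"]
    by simp
qed

section \<open>Averaging over windows for finite p\<close>

text \<open>For m < D the subtraction truncates and the window is {0..m}.\<close>

definition window :: "nat \<Rightarrow> nat \<Rightarrow> (nat \<Rightarrow> complex) \<Rightarrow> nat \<Rightarrow> complex" where
  "window D m x n = (if m - D \<le> n \<and> n \<le> m then x n else 0)"

lemma window_index_iff: "(m - D \<le> n \<and> n \<le> m) \<longleftrightarrow> m \<in> {n..n+D}" for m n D :: nat
  by auto

lemma norm_H_plus_window_powr_le:
  assumes "1 \<le> q" "0 < t" "0 < s"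
  shows "norm (H_plus lam \<alpha> \<psi> (window D m x) n) powr q
    \<le> ((t+s)/t) powr (q-1) * (of_bool (m \<in> {n..n+D}) * norm (H_plus lam \<alpha> \<psi> x n) powr q)
     + ((t+s)/s) powr (q-1) * 2 powr (q-1) *
       ((of_bool (m = n) + of_bool (m = n + D + 1)) * norm (x (Suc n)) powr q
        + (of_bool (m = n - 1) + of_bool (m = n + D)) * (if n = 0 then 0 else norm (x (n - 1)) powr q))"
proof -
  define P where "P j \<longleftrightarrow> m \<in> {j..j+D}" for j
  define v where "v = of_bool (P n) * H_plus lam \<alpha> \<psi> x n"
  define d1 where "d1 = (of_bool (P (Suc n)) - of_bool (P n)) * x (Suc n)"
  define d2 where "d2 = (if n = 0 then 0 else (of_bool (P (n - 1)) - of_bool (P n)) * x (n - 1))"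
  have "H_plus lam \<alpha> \<psi> (window D m x) n = v + (d1 + d2)"
    unfolding v_def d1_def d2_def P_def H_plus_def window_def window_index_iff
    by (auto simp: algebra_simps)
  then have "norm (H_plus lam \<alpha> \<psi> (window D m x) n) powr q
      \<le> ((t+s)/t) powr (q-1) * norm v powr q + ((t+s)/s) powr (q-1) * norm (d1 + d2) powr q"
    using assms by (intro powr_le_weighted_sum) (auto intro: norm_triangle_ineq)
  moreover have "norm v powr q = of_bool (m \<in> {n..n+D}) * norm (H_plus lam \<alpha> \<psi> x n) powr q"
    using assms by (simp add: v_def P_def)
  moreover have "((t+s)/s) powr (q-1) * norm (d1 + d2) powr q
      \<le> ((t+s)/s) powr (q-1) * (2 powr (q-1) *
          ((of_bool (m = n) + of_bool (m = n + D + 1)) * norm (x (Suc n)) powr q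
           + (of_bool (m = n - 1) + of_bool (m = n + D)) * (if n = 0 then 0 else norm (x (n - 1)) powr q)))"
  proof (intro mult_left_mono)
    have d1: "norm d1 powr q \<le> (of_bool (m = n) + of_bool (m = n + D + 1)) * norm (x (Suc n)) powr q"
      using assms by (cases "P (Suc n) = P n") (auto simp: d1_def P_def norm_mult)
    have d2: "norm d2 powr q
        \<le> (of_bool (m = n - 1) + of_bool (m = n + D)) * (if n = 0 then 0 else norm (x (n - 1)) powr q)"
      using assms by (cases "n = 0 \<or> P (n - 1) = P n") (auto simp: d2_def P_def norm_mult)
    have "norm (d1 + d2) powr q \<le> 2 powr (q-1) * norm d1 powr q + 2 powr (q-1) * norm d2 powr q"
      using powr_le_weighted_sum[of "norm (d1 + d2)" "norm d1" "norm d2" 1 1 q] assms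
      by (simp add: norm_triangle_ineq)
    then show "norm (d1 + d2) powr q \<le> 2 powr (q-1) *
        ((of_bool (m = n) + of_bool (m = n + D + 1)) * norm (x (Suc n)) powr q
         + (of_bool (m = n - 1) + of_bool (m = n + D)) * (if n = 0 then 0 else norm (x (n - 1)) powr q))"
      unfolding distrib_left
      by (rule order_trans[OF _ add_mono[OF mult_left_mono[OF d1 powr_ge_zero] mult_left_mono[OF d2 powr_ge_zero]]])
  qed simp
  ultimately show ?thesis
    by (simp add: mult.assoc)
qed

lemma sum_H_plus_window_powr_le:
  assumes "1 \<le> q" "0 < t" "0 < s"
  shows "(\<Sum>m\<le>M. \<Sum>n\<le>R. norm (H_plus lam \<alpha> \<psi> (window D m x) n) powr q)
    \<le> ((t+s)/t) powr (q-1) * real (D+1) * (\<Sum>n\<le>R. norm (H_plus lam \<alpha> \<psi> x n) powr q)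
      + ((t+s)/s) powr (q-1) * 2 powr (q-1) * 4 * (\<Sum>n\<le>Suc R. norm (x n) powr q)"
proof -
  define w1 where "w1 = ((t+s)/t) powr (q-1)"
  define w2 where "w2 = ((t+s)/s) powr (q-1) * 2 powr (q-1)"
  define a where "a n = norm (x n) powr q" for n
  define a' where "a' n = (if n = 0 then 0 else a (n - 1))" for n
  define c where "c n = norm (H_plus lam \<alpha> \<psi> x n) powr q" for n
  have count_window: "(\<Sum>m\<le>M. of_bool (m \<in> {n..n+D}) :: real) \<le> real (D+1)" for n
  proof -
    have "card ({..M} \<inter> {m. m \<in> {n..n+D}}) \<le> card {n..n+D}"
      by (rule card_mono) auto
    then show ?thesis
      by simp
  qed
  have count_two: "(\<Sum>m\<le>M. of_bool (m = u) :: real) + (\<Sum>m\<le>M. of_bool (m = v)) \<le> 2" for u v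
    using card_mono[of "{u}" "{..M} \<inter> {m. m = u}"] card_mono[of "{v}" "{..M} \<inter> {m. m = v}"]
    by simp
  have "(\<Sum>m\<le>M. \<Sum>n\<le>R. norm (H_plus lam \<alpha> \<psi> (window D m x) n) powr q)
      \<le> (\<Sum>m\<le>M. \<Sum>n\<le>R. w1 * (of_bool (m \<in> {n..n+D}) * c n)
            + w2 * ((of_bool (m = n) + of_bool (m = n + D + 1)) * a (Suc n)
                    + (of_bool (m = n - 1) + of_bool (m = n + D)) * a' n))"
    unfolding w1_def w2_def a_def a'_def c_def
    by (intro sum_mono norm_H_plus_window_powr_le[OF assms])
  also have "\<dots> = (\<Sum>n\<le>R. w1 * ((\<Sum>m\<le>M. of_bool (m \<in> {n..n+D})) * c n)
            + w2 * (((\<Sum>m\<le>M. of_bool (m = n)) + (\<Sum>m\<le>M. of_bool (m = n + D + 1))) * a (Suc n)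
                    + ((\<Sum>m\<le>M. of_bool (m = n - 1)) + (\<Sum>m\<le>M. of_bool (m = n + D))) * a' n))"
    by (subst sum.swap) (simp only: sum.distrib flip: sum_distrib_left sum_distrib_right)
  also have "\<dots> \<le> (\<Sum>n\<le>R. w1 * (real (D+1) * c n) + w2 * (2 * a (Suc n) + 2 * a' n))"
  proof (intro sum_mono add_mono mult_left_mono mult_right_mono)
  qed (use count_window count_two in \<open>auto simp: w1_def w2_def a_def a'_def c_def\<close>)
  also have "\<dots> = w1 * real (D+1) * (\<Sum>n\<le>R. c n) + 2 * w2 * ((\<Sum>n\<le>R. a (Suc n)) + (\<Sum>n\<le>R. a' n))"
    by (simp add: sum.distrib sum_distrib_left algebra_simps)
  also have "\<dots> \<le> w1 * real (D+1) * (\<Sum>n\<le>R. c n) + 2 * w2 * (2 * (\<Sum>n\<le>Suc R. a n))"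
    using sum_neighbours_le[of a R] by (intro add_left_mono mult_left_mono) (auto simp: w2_def a_def a'_def)
  finally show ?thesis
    by (simp add: w1_def w2_def a_def c_def algebra_simps)
qed

lemma sum_window_powr_ge:
  assumes "M \<le> R"
  shows "real (D+1) * (\<Sum>n\<le>M. norm (x n) powr q) \<le> (\<Sum>m\<le>M+D. \<Sum>n\<le>R. norm (window D m x n) powr q)"
proof -
  have "{..M+D} \<inter> {m. m \<in> {n..n+D}} = {n..n+D}" if "n \<le> M" for n
    using that by auto
  then have "real (D+1) * (\<Sum>n\<le>M. norm (x n) powr q)
      = (\<Sum>n\<le>M. (\<Sum>m\<le>M+D. of_bool (m \<in> {n..n+D})) * norm (x n) powr q)"
    by (simp add: sum_distrib_left)
  also have "\<dots> \<le> (\<Sum>n\<le>R. (\<Sum>m\<le>M+D. of_bool (m \<in> {n..n+D})) * norm (x n) powr q)"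
    using assms by (intro sum_mono2) auto
  also have "\<dots> = (\<Sum>n\<le>R. \<Sum>m\<le>M+D. of_bool (m \<in> {n..n+D}) * norm (x n) powr q)"
    by (simp add: sum_distrib_right)
  also have "\<dots> = (\<Sum>m\<le>M+D. \<Sum>n\<le>R. norm (window D m x n) powr q)"
  proof -
    have "norm (window D m x n) powr q = of_bool (m \<in> {n..n+D}) * norm (x n) powr q" for m n
      by (simp add: window_def window_index_iff)
    then show ?thesis
      by (subst sum.swap) simp
  qed
  finally show ?thesis .
qed

lemma nu_H_section_lower_bound_window:
  assumes "1 \<le> p" "p \<noteq> \<infinity>" "0 \<le> B" "\<forall>j. B \<le> nu_H_section p lam \<alpha> (frac (of_int j * \<alpha>)) D"
    and "Suc m \<le> R"
  shows "B powr real_of_ereal p * (\<Sum>n\<le>R. norm (window D m x n) powr real_of_ereal p)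
    \<le> (\<Sum>n\<le>R. norm (H_plus lam \<alpha> (frac (of_int k * \<alpha>)) (window D m x) n) powr real_of_ereal p)"
proof -
  define q where "q = real_of_ereal p"
  define s where "s = m - D"
  define y where "y = window D m x"
  define T where "T = H_plus lam \<alpha> (frac (of_int k * \<alpha>))"
  have "1 \<le> q"
    using real_of_ereal_ge_1[OF assms(1,2)] by (simp add: q_def)
  have supp: "y n = 0" if "n < s \<or> s + D < n" for n
    using that by (auto simp: y_def window_def s_def)
  have window_norm: "(\<Sum>n\<le>R. norm (y n) powr q) \<le> lp_norm p {0..D} (\<lambda>n. y (n + s)) powr q"
    unfolding q_def lp_norm_shift_powr[OF assms(1,2)] using supp by (intro sum_le_sum_of_support) auto
  have image_norm: "lp_norm p {0..D+1} (\<lambda>n. T y (n + s)) powr q \<le> (\<Sum>n\<le>R. norm (T y n) powr q)"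
    unfolding q_def lp_norm_shift_powr[OF assms(1,2)]
  proof (rule sum_le_sum_of_support)
    fix n
    assume "n \<in> {s..s+(D+1)} - {..R}"
    then have "Suc m < n" "m < n - 1"
      using assms(5) by auto
    then show "norm (T y n) powr real_of_ereal p = 0"
      by (simp add: T_def H_plus_def y_def window_def)
  qed auto
  have "B * lp_norm p {0..D} (\<lambda>n. y (n + s))
      \<le> nu_H_section p lam \<alpha> (frac (of_int (k + int s) * \<alpha>)) D * lp_norm p {0..D} (\<lambda>n. y (n + s))"
    using spec[OF assms(4), of "k + int s"] lp_norm_nonneg[of "{0..D}" p] by (intro mult_right_mono) auto
  also have "\<dots> \<le> lp_norm p {0..D+1} (\<lambda>n. T y (n + s))"
    unfolding T_def using assms(1) supp by (rule nu_H_section_shift_mult_le)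
  finally have "(B * lp_norm p {0..D} (\<lambda>n. y (n + s))) powr q \<le> lp_norm p {0..D+1} (\<lambda>n. T y (n + s)) powr q"
    using assms(3) \<open>1 \<le> q\<close> lp_norm_nonneg[of "{0..D}" p] by (intro powr_mono2) auto
  then have "B powr q * lp_norm p {0..D} (\<lambda>n. y (n + s)) powr q \<le> (\<Sum>n\<le>R. norm (T y n) powr q)"
    using image_norm assms(3) lp_norm_nonneg[of "{0..D}" p] by (simp add: powr_mult)
  then show ?thesis
    using window_norm mult_left_mono[OF window_norm, of "B powr q"]
    by (simp add: q_def[symmetric] y_def[symmetric] T_def[symmetric])
qed

lemma nu_H_section_lower_bound_window_average:
  assumes "1 \<le> p" "p \<noteq> \<infinity>" "lp_mem p UNIV x" "lp_norm p UNIV x = 1"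
    and "0 \<le> B" "\<forall>j. B \<le> nu_H_section p lam \<alpha> (frac (of_int j * \<alpha>)) D"
    and "lp_norm p UNIV (H_plus lam \<alpha> (frac (of_int k * \<alpha>)) x) \<le> t" "0 < t" "0 < s"
  defines "q \<equiv> real_of_ereal p"
  shows "real (D+1) * (B powr q * (\<Sum>n\<le>M. norm (x n) powr q))
    \<le> real (D+1) * ((t+s)/t) powr (q-1) * t powr q + ((t+s)/s) powr (q-1) * (2 powr (q-1) * 4)"
proof -
  define R where "R = Suc (M + D)"
  define T where "T = H_plus lam \<alpha> (frac (of_int k * \<alpha>))"
  define w1 where "w1 = ((t+s)/t) powr (q-1)"
  define w2 where "w2 = ((t+s)/s) powr (q-1) * 2 powr (q-1) * 4"
  have "1 \<le> q"
    using real_of_ereal_ge_1[OF assms(1,2)] by (simp add: q_def)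
  have x: "(\<lambda>n. norm (x n) powr q) summable_on UNIV" "infsum (\<lambda>n. norm (x n) powr q) UNIV = 1"
    using assms(3,4) assms(2) by (simp_all add: lp_mem_def q_def lp_norm_eq_1_iff_infsum[OF assms(1,2)])
  have Tx: "(\<lambda>n. norm (T x n) powr q) summable_on UNIV"
    using lp_mem_H_plus[OF assms(1,3)] assms(2) by (simp add: lp_mem_def T_def q_def)
  have "real (D+1) * (B powr q * (\<Sum>n\<le>M. norm (x n) powr q))
      \<le> B powr q * (\<Sum>m\<le>M+D. \<Sum>n\<le>R. norm (window D m x n) powr q)"
    using sum_window_powr_ge[of M R D x q] by (simp add: R_def mult.left_commute mult_left_mono)
  also have "\<dots> \<le> (\<Sum>m\<le>M+D. \<Sum>n\<le>R. norm (T (window D m x) n) powr q)"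
    unfolding q_def T_def using assms(1,2,5,6)
    by (subst sum_distrib_left) (intro sum_mono nu_H_section_lower_bound_window, auto simp: R_def)
  also have "\<dots> \<le> w1 * real (D+1) * (\<Sum>n\<le>R. norm (T x n) powr q) + w2 * (\<Sum>n\<le>Suc R. norm (x n) powr q)"
    unfolding w1_def w2_def T_def using \<open>1 \<le> q\<close> assms(8,9) by (rule sum_H_plus_window_powr_le)
  also have "\<dots> \<le> w1 * real (D+1) * t powr q + w2 * 1"
  proof (intro add_mono mult_left_mono)
    have "(\<Sum>n\<le>R. norm (T x n) powr q) \<le> infsum (\<lambda>n. norm (T x n) powr q) UNIV"
      using Tx by (intro finite_sum_le_infsum) auto
    also have "\<dots> = lp_norm p UNIV (T x) powr q"
      unfolding q_def by (rule lp_norm_powr[OF assms(1,2), symmetric])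
    also have "\<dots> \<le> t powr q"
      using assms(2,7) \<open>1 \<le> q\<close> by (intro powr_mono2) (auto simp: T_def lp_norm_def)
    finally show "(\<Sum>n\<le>R. norm (T x n) powr q) \<le> t powr q" .
    show "(\<Sum>n\<le>Suc R. norm (x n) powr q) \<le> 1"
      using x by (metis finite_sum_le_infsum finite_atMost subset_UNIV powr_ge_zero)
  qed (auto simp: w1_def w2_def)
  finally show ?thesis
    by (simp add: w1_def w2_def algebra_simps)
qed

text \<open>
  The constant s satisfies (D + 1) s powr q = 4 * 2 powr (q - 1), the total weight of the
  boundary terms, so that the averaged bound recombines into (t + s) powr q.
\<close>

lemma nu_H_section_lower_bound_window_average_powr:
  assumes "1 \<le> p" "p \<noteq> \<infinity>" "lp_mem p UNIV x" "lp_norm p UNIV x = 1"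
    and "0 \<le> B" "\<forall>j. B \<le> nu_H_section p lam \<alpha> (frac (of_int j * \<alpha>)) D"
    and "lp_norm p UNIV (H_plus lam \<alpha> (frac (of_int k * \<alpha>)) x) \<le> t" "0 < t"
  defines "q \<equiv> real_of_ereal p" and "s \<equiv> 2 * (2 / real (D+1)) powr (1 / real_of_ereal p)"
  shows "B powr q * (\<Sum>n\<le>M. norm (x n) powr q) \<le> (t + s) powr q"
proof -
  have "1 \<le> q" "0 < s"
    using real_of_ereal_ge_1[OF assms(1,2)] by (simp_all add: q_def s_def)
  have "s powr q = 2 powr q * (2 / real (D+1))"
    using \<open>1 \<le> q\<close> by (simp add: s_def q_def[symmetric] powr_mult powr_powr)
  moreover have "2 powr q = 2 powr (q-1) * (2::real)"
    using powr_add[of 2 "q-1" 1] by simp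
  ultimately have s_powr: "2 powr (q-1) * 4 = real (D+1) * s powr q"
    by simp
  have "real (D+1) * (B powr q * (\<Sum>n\<le>M. norm (x n) powr q))
      \<le> real (D+1) * ((t+s)/t) powr (q-1) * t powr q + ((t+s)/s) powr (q-1) * (2 powr (q-1) * 4)"
    unfolding q_def by (rule nu_H_section_lower_bound_window_average[OF assms(1-8) \<open>0 < s\<close>])
  also have "\<dots> = real (D+1) * (((t+s)/t) powr (q-1) * t powr q + ((t+s)/s) powr (q-1) * s powr q)"
    unfolding s_powr by (simp add: algebra_simps)
  also have "\<dots> = real (D+1) * (t + s) powr q"
    using weighted_powr_split_eq[OF \<open>0 < t\<close> \<open>0 < s\<close>] by simp
  finally show ?thesis
    by simp
qed

lemma nu_H_section_lower_bound_le_finite: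
  assumes "1 \<le> p" "p \<noteq> \<infinity>" "lp_mem p UNIV x" "lp_norm p UNIV x = 1"
    and "\<forall>j. B \<le> nu_H_section p lam \<alpha> (frac (of_int j * \<alpha>)) D"
  shows "B \<le> lp_norm p UNIV (H_plus lam \<alpha> (frac (of_int k * \<alpha>)) x)
    + 2 * (2 / real (D+1)) powr (1 / real_of_ereal p)"
proof -
  define q where "q = real_of_ereal p"
  define \<nu> where "\<nu> = lp_norm p UNIV (H_plus lam \<alpha> (frac (of_int k * \<alpha>)) x)"
  define s where "s = 2 * (2 / real (D+1)) powr (1/q)"
  have "1 \<le> q" "0 \<le> \<nu>" "0 < s"
    using real_of_ereal_ge_1[OF assms(1,2)] assms(2) by (simp_all add: q_def \<nu>_def lp_norm_def s_def)
  have x: "(\<lambda>n. norm (x n) powr q) sums 1"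
    using assms(2-4) by (intro has_sum_imp_sums)
      (simp add: has_sum_iff lp_mem_def q_def lp_norm_eq_1_iff_infsum[OF assms(1,2)])
  have "B \<le> \<nu> + s + e" if "0 < e" "0 < B" for e
  proof -
    have t: "lp_norm p UNIV (H_plus lam \<alpha> (frac (of_int k * \<alpha>)) x) \<le> \<nu> + e" "0 < \<nu> + e"
      using that \<open>0 \<le> \<nu>\<close> by (simp_all add: \<nu>_def)
    have "B powr q * (\<Sum>n\<le>M. norm (x n) powr q) \<le> (\<nu> + e + s) powr q" for M
      unfolding q_def s_def by (rule nu_H_section_lower_bound_window_average_powr[OF assms(1-4) _ assms(5) t]) (use that in simp)
    then have "B powr q * 1 \<le> (\<nu> + e + s) powr q"
      by (rule mult_sums_le[OF x])
    then show ?thesis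
      using that \<open>1 \<le> q\<close> \<open>0 \<le> \<nu>\<close> \<open>0 < s\<close> powr_less_mono2[of q "\<nu> + e + s" B] by force
  qed
  then have "B \<le> \<nu> + s"
    using \<open>0 \<le> \<nu>\<close> \<open>0 < s\<close> by (cases "0 < B") (auto intro: field_le_epsilon)
  then show ?thesis
    by (simp add: \<nu>_def s_def q_def)
qed

section \<open>A tent cutoff for p = \<infinity>\<close>

lemma tent_diff_le:
  fixes u v z L :: real
  assumes "0 < L"
  shows "\<bar>max 0 (1 - \<bar>u - z\<bar> / L) - max 0 (1 - \<bar>v - z\<bar> / L)\<bar> \<le> \<bar>u - v\<bar> / L"
proof -
  have "\<bar>max 0 a - max 0 b\<bar> \<le> \<bar>a - b\<bar>" for a b :: real
    by (simp add: max_def abs_if)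
  from this[of "1 - \<bar>u - z\<bar> / L" "1 - \<bar>v - z\<bar> / L"]
  moreover have "\<bar>(1 - \<bar>u - z\<bar> / L) - (1 - \<bar>v - z\<bar> / L)\<bar> = \<bar>\<bar>v - z\<bar> - \<bar>u - z\<bar>\<bar> / L"
    using assms by (simp add: diff_divide_distrib[symmetric])
  moreover have "\<bar>\<bar>v - z\<bar> - \<bar>u - z\<bar>\<bar> / L \<le> \<bar>u - v\<bar> / L"
    using assms by (intro divide_right_mono) auto
  ultimately show ?thesis
    by linarith
qed

lemma norm_H_plus_cutoff_le:
  assumes "\<And>n. 0 \<le> \<phi> n" "\<And>n. \<phi> n \<le> 1" "\<And>n. \<bar>\<phi> (Suc n) - \<phi> n\<bar> \<le> \<delta>"
    and "\<And>n. norm (x n) \<le> 1" "\<And>n. norm (H_plus lam \<alpha> \<psi> x n) \<le> \<nu>"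
  shows "norm (H_plus lam \<alpha> \<psi> (\<lambda>n. complex_of_real (\<phi> n) * x n) n) \<le> \<nu> + 2 * \<delta>"
proof -
  define e1 where "e1 = complex_of_real (\<phi> (Suc n) - \<phi> n) * x (Suc n)"
  define e2 where "e2 = (if n = 0 then 0 else complex_of_real (\<phi> (n - 1) - \<phi> n) * x (n - 1))"
  have "H_plus lam \<alpha> \<psi> (\<lambda>n. complex_of_real (\<phi> n) * x n) n
      = complex_of_real (\<phi> n) * H_plus lam \<alpha> \<psi> x n + e1 + e2"
    by (simp add: H_plus_def e1_def e2_def algebra_simps)
  moreover have "norm (complex_of_real (\<phi> n) * H_plus lam \<alpha> \<psi> x n) \<le> 1 * \<nu>"
    unfolding norm_mult using assms(1,2,5) by (intro mult_mono) auto
  moreover have "norm e1 \<le> \<delta> * 1"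
    unfolding e1_def norm_mult norm_of_real using assms(3)[of n] assms(4)[of "Suc n"] by (intro mult_mono) auto
  moreover have "norm e2 \<le> \<delta> * 1"
  proof (cases n)
    case (Suc m)
    then have "norm e2 = \<bar>\<phi> (Suc m) - \<phi> m\<bar> * norm (x m)"
      by (simp add: e2_def norm_mult abs_minus_commute del: of_real_diff)
    then show ?thesis
      using assms(3)[of m] assms(4)[of m] mult_mono[of _ \<delta> "norm (x m)" 1] by simp
  qed (use assms(3)[of 0] in \<open>simp add: e2_def\<close>)
  ultimately show ?thesis
    using norm_add3_le[of "complex_of_real (\<phi> n) * H_plus lam \<alpha> \<psi> x n" e1 e2] by simp
qed

lemma nu_H_section_lower_bound_tent:
  fixes L :: nat
  assumes "0 < L" "2 * L \<le> D + 2" "\<And>n. norm (x n) \<le> 1"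
    and "\<And>n. norm (H_plus lam \<alpha> (frac (of_int k * \<alpha>)) x n) \<le> \<nu>"
    and "\<forall>j. B \<le> nu_H_section \<infinity> lam \<alpha> (frac (of_int j * \<alpha>)) D"
  shows "B * norm (x n0) \<le> \<nu> + 2 / real L"
proof -
  define \<phi> where "\<phi> n = max 0 (1 - \<bar>real n - real n0\<bar> / real L)" for n
  define y where "y n = complex_of_real (\<phi> n) * x n" for n
  define s where "s = n0 - (L - 1)"
  define T where "T = H_plus lam \<alpha> (frac (of_int k * \<alpha>))"
  define W where "W = lp_norm \<infinity> {0..D} (\<lambda>m. y (m + s))"
  have supp: "y n = 0" if "n < s \<or> s + D < n" for n
  proof -
    have "real L \<le> \<bar>real n - real n0\<bar>"
      using that assms(2) by (auto simp: s_def)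
    then show ?thesis
      using assms(1) by (simp add: y_def \<phi>_def field_simps)
  qed
  have "norm (y (n0 - s + s)) \<le> W"
    unfolding W_def using assms(1,2) by (intro lp_norm_infinity_ge) (auto simp: s_def)
  then have "norm (x n0) \<le> W"
    using assms(1) by (simp add: y_def \<phi>_def s_def)
  have "norm (T y n) \<le> \<nu> + 2 * (1 / real L)" for n
    unfolding T_def y_def
  proof (rule norm_H_plus_cutoff_le)
    show "\<bar>\<phi> (Suc n) - \<phi> n\<bar> \<le> 1 / real L" for n
      using tent_diff_le[of "real L" "real (Suc n)" "real n0" "real n"] assms(1) by (simp add: \<phi>_def)
  qed (use assms(1,3,4) in \<open>auto simp: \<phi>_def\<close>)
  then have "lp_norm \<infinity> {0..D+1} (\<lambda>m. T y (m + s)) \<le> \<nu> + 2 / real L"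
    by (intro lp_norm_infinity_le) auto
  moreover have "nu_H_section \<infinity> lam \<alpha> (frac (of_int (k + int s) * \<alpha>)) D * W
      \<le> lp_norm \<infinity> {0..D+1} (\<lambda>m. T y (m + s))"
    unfolding W_def T_def using supp by (intro nu_H_section_shift_mult_le) auto
  moreover have "B * norm (x n0) \<le> nu_H_section \<infinity> lam \<alpha> (frac (of_int (k + int s) * \<alpha>)) D * W"
    using spec[OF assms(5), of "k + int s"] \<open>norm (x n0) \<le> W\<close> nu_H_section_nonneg
    by (meson mult_left_mono mult_right_mono norm_ge_zero order_trans)
  ultimately show ?thesis
    by linarith
qed

lemma nu_H_section_lower_bound_le_infinity:
  assumes "0 < D" "lp_mem \<infinity> UNIV x" "lp_norm \<infinity> UNIV x = 1"
    and "\<forall>j. B \<le> nu_H_section \<infinity> lam \<alpha> (frac (of_int j * \<alpha>)) D"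
  shows "B \<le> lp_norm \<infinity> UNIV (H_plus lam \<alpha> (frac (of_int k * \<alpha>)) x) + 4 / real D"
proof -
  define \<nu> where "\<nu> = lp_norm \<infinity> UNIV (H_plus lam \<alpha> (frac (of_int k * \<alpha>)) x)"
  define L where "L = (D + 2) div 2"
  have x: "norm (x n) \<le> 1" for n
    using assms(2,3) lp_norm_infinity_ge[of n UNIV x] by (simp add: lp_mem_def)
  have Tx: "norm (H_plus lam \<alpha> (frac (of_int k * \<alpha>)) x n) \<le> \<nu>" for n
    using lp_mem_H_plus[OF _ assms(2)] lp_norm_infinity_ge[of n UNIV] by (simp add: \<nu>_def lp_mem_def)
  then have "0 \<le> \<nu>"
    by (meson norm_ge_zero order_trans)
  have "0 < L" "2 * L \<le> D + 2"
    using assms(1) by (auto simp: L_def)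
  have "2 / real L \<le> 4 / real D"
    using assms(1) by (simp add: L_def field_simps)
  have "B \<le> \<nu> + 2 / real L"
  proof (cases "B \<le> 0")
    case True
    then show ?thesis
      using \<open>0 \<le> \<nu>\<close> divide_nonneg_nonneg[of 2 "real L"] by linarith
  next
    case False
    have "norm (x n) \<le> (\<nu> + 2 / real L) / B" for n
      using nu_H_section_lower_bound_tent[OF \<open>0 < L\<close> \<open>2 * L \<le> D + 2\<close> x Tx assms(4), of n] False
      by (simp add: field_simps)
    then have "lp_norm \<infinity> UNIV x \<le> (\<nu> + 2 / real L) / B"
      by (intro lp_norm_infinity_le) auto
    then show ?thesis
      using False assms(3) by (simp add: field_simps)
  qed
  with \<open>2 / real L \<le> 4 / real D\<close> show ?thesis
    by (simp add: \<nu>_def)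
qed

lemma nu_H_section_lower_bound_le:
  assumes "1 \<le> p" "0 < D" "\<alpha> < 1" "lp_mem p UNIV x" "lp_norm p UNIV x = 1"
    and "\<forall>j. B \<le> nu_H_section p lam \<alpha> (frac (of_int j * \<alpha>)) D"
    and "p \<noteq> \<infinity> \<Longrightarrow> \<epsilon> > 2 * H_opnorm p lam \<alpha> 0 * (4 / real D) powr (1 / real_of_ereal p)"
    and "p = \<infinity> \<Longrightarrow> \<epsilon> > 2 * H_opnorm p lam \<alpha> 0 / real D"
  shows "B \<le> lp_norm p UNIV (H_plus lam \<alpha> (frac (of_int k * \<alpha>)) x) + \<epsilon>"
proof (cases "p = \<infinity>")
  case True
  have "4 / real D \<le> 2 * H_opnorm p lam \<alpha> 0 / real D"
    using H_opnorm_infinity_ge_2[OF assms(3), of lam] True by (simp add: divide_right_mono)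
  then show ?thesis
    using nu_H_section_lower_bound_le_infinity[OF assms(2) _ _ assms(6)[unfolded True], of x k] assms(4,5,8) True
    by simp
next
  case False
  define q where "q = real_of_ereal p"
  have "1 \<le> q"
    using real_of_ereal_ge_1[OF assms(1) False] by (simp add: q_def)
  have "(2 / real (D+1)) powr (1/q) \<le> (4 / real D) powr (1/q)"
    using assms(2) \<open>1 \<le> q\<close> by (intro powr_mono2) (auto simp: field_simps)
  also have "\<dots> \<le> H_opnorm p lam \<alpha> 0 * (4 / real D) powr (1/q)"
    using mult_right_mono[OF H_opnorm_ge_1[OF assms(1) False assms(3)], of "(4 / real D) powr (1/q)"]
    by simp
  finally show ?thesis
    using nu_H_section_lower_bound_le_finite[OF assms(1) False assms(4,5,6), of k] assms(7)[OF False]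
    by (simp add: q_def)
qed

lemma nu_H_plus_ge:
  assumes "\<And>x. lp_mem p UNIV x \<Longrightarrow> lp_norm p UNIV x = 1 \<Longrightarrow> B \<le> lp_norm p UNIV (H_plus lam \<alpha> \<psi> x) + c"
  shows "B - c \<le> nu_H_plus p lam \<alpha> \<psi>"
  unfolding nu_H_plus_def
proof (rule cInf_greatest)
  show "{lp_norm p UNIV (H_plus lam \<alpha> \<psi> x) | x. lp_mem p UNIV x \<and> lp_norm p UNIV x = 1} \<noteq> {}"
    using lp_norm_delta[of 0 UNIV p] by blast
qed (use assms in force)

theorem lemma6p6:
  fixes \<alpha> \<theta> lam \<epsilon> :: real and p :: ereal and D :: nat
  assumes "\<alpha> \<in> {0..1}" and "\<alpha> \<notin> \<rat>"
    and "\<theta> \<in> {0..<1}"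
    and "1 \<le> p"
    and "\<epsilon> > 0" and "D > 0"
    and "p \<noteq> \<infinity> \<Longrightarrow> \<epsilon> > 2 * H_opnorm p lam \<alpha> 0 * (4 / real D) powr (1 / real_of_ereal p)"
    and "p = \<infinity> \<Longrightarrow> \<epsilon> > 2 * H_opnorm p lam \<alpha> 0 / real D"
  shows "(INF k::int. nu_H_plus p lam \<alpha> (frac (of_int k * \<alpha>)))
           \<ge> (INF k::int. nu_H_section p lam \<alpha> (frac (of_int k * \<alpha>)) D) - \<epsilon>"
proof -
  \<comment> \<open>Irrationality of \<alpha> only serves to exclude \<alpha> = 1.\<close>
  have "\<alpha> \<noteq> 1"
    using assms(2) by auto
  with assms(1) have "\<alpha> < 1"
    by simp
  define B where "B = (INF j::int. nu_H_section p lam \<alpha> (frac (of_int j * \<alpha>)) D)"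
  have "\<forall>j. B \<le> nu_H_section p lam \<alpha> (frac (of_int j * \<alpha>)) D"
    unfolding B_def by (auto intro!: cINF_lower bdd_belowI2 nu_H_section_nonneg)
  then have "B - \<epsilon> \<le> nu_H_plus p lam \<alpha> (frac (of_int k * \<alpha>))" for k
    using nu_H_section_lower_bound_le[OF assms(4,6) \<open>\<alpha> < 1\<close> _ _ _ assms(7,8)] by (intro nu_H_plus_ge)
  then show ?thesis
    unfolding B_def by (intro cINF_greatest) auto
qed

end
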